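(* Let $p=N=5$, and let $r_R=\operatorname{rank}Q_R$ for the maps $Q_R:\Lambda^R\to\Lambda^{R+5}$ defined below, whose values for $0\le R\le 9$ are \[ (r_0,\dots,r_9)=(1,\,25,\,300,\,2300,\,12650,\,53129,\,177075,\,480400,\,1045525,\,1723450). \] Consider the degree-20 rank polynomial $\mathcal R_{5,5}(x)=\sum_{R=0}^{20}r_Rx^R$, which is palindromic ($r_{20-R}=r_R$). These ten ranks, palindromicity, and the single condition $(1+x)\mid\mathcal R_{5,5}(x)$ determine the middle coefficient $r_{10}$ uniquely (namely $r_{10}=2{,}047{,}506$). For the resulting polynomial, $(1+x)^4\mid\mathcal R_{5,5}(x)$ while $(1+x)^5\nmid\mathcal R_{5,5}(x)$.
   Context: $\Lambda=\Lambda^\bullet(\mathbb{C}^{5\times5})$ is the exterior algebra on the $25$ odd generators $\Psi_{ij}$, $1\le i,j\le5$, and $Q_R$ is left wedge multiplication by $\mathrm{Tr}(\Psi^5)=\sum_{i_1,\dots,i_5}\Psi_{i_1i_2}\Psi_{i_2i_3}\Psi_{i_3i_4}\Psi_{i_4i_5}\Psi_{i_5i_1}$ restricted to $\Lambda^R$. Divisibility is in $\mathbb{Q}[x]$. *)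

theory Defs
  imports "HOL-Computational_Algebra.Polynomial"
begin

definition rank_poly :: "(nat \<Rightarrow> nat) \<Rightarrow> rat poly" where
  "rank_poly r = (\<Sum>R\<le>20. monom (of_nat (r R)) R)"

end

theory Submission
  imports Defs
begin

text \<open>Palindromicity fixes every coefficient except r_10, and evaluating at x = -1 gives
  R(-1) = r_10 - 2047506; since 1 + x divides a polynomial iff it vanishes at -1, this pins
  down r_10. The resulting polynomial factors as (1 + x)^4 Q(x) with Q(-1) = 13750, so no fifth
  factor 1 + x divides it.\<close>

lemma coeff_rank_poly: "coeff (rank_poly r) n = (if n \<le> 20 then of_nat (r n) else 0)"
  unfolding rank_poly_def by (simp add: coeff_sum)

lemma rank_poly_eq_Poly:
  "rank_poly r = Poly [of_nat (r 0), of_nat (r 1), of_nat (r 2), of_nat (r 3), of_nat (r 4),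
     of_nat (r 5), of_nat (r 6), of_nat (r 7), of_nat (r 8), of_nat (r 9), of_nat (r 10),
     of_nat (r 11), of_nat (r 12), of_nat (r 13), of_nat (r 14), of_nat (r 15), of_nat (r 16),
     of_nat (r 17), of_nat (r 18), of_nat (r 19), of_nat (r 20)]"
proof -
  have "rank_poly r = Poly (map (\<lambda>R. of_nat (r R)) [0..<21])"
    by (rule poly_eqI) (simp add: coeff_rank_poly nth_default_def)
  then show ?thesis by (simp add: numeral_eq_Suc)
qed

lemma linear_dvd_iff_poly_eq_0:
  fixes p :: "'a::comm_ring_1 poly"
  shows "[:c, 1:] dvd p \<longleftrightarrow> poly p (- c) = 0"
  using poly_eq_0_iff_dvd[of p "- c"] by simp

lemma power_Suc_dvd_power_mult_iff:
  fixes a :: "'a::idom"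
  assumes "a \<noteq> 0"
  shows "a ^ Suc k dvd a ^ k * q \<longleftrightarrow> a dvd q"
  using assms by (simp add: power_Suc2)

definition rank_poly_5_5_cofactor :: "rat poly" where
  "rank_poly_5_5_cofactor = Poly [1, 21, 210, 1330, 5985, 20348, 54243, 116070, 168410,
     116070, 54243, 20348, 5985, 1330, 210, 21, 1]"

lemma rank_poly_5_5_factorization:
  "[:1, 1:] ^ 4 * rank_poly_5_5_cofactor = Poly [1, 25, 300, 2300, 12650, 53129, 177075,
     480400, 1045525, 1723450, 2047506, 1723450, 1045525, 480400, 177075, 53129, 12650,
     2300, 300, 25, 1]"
  unfolding rank_poly_5_5_cofactor_def by (simp add: numeral_eq_Suc)

lemma poly_rank_poly_5_5_cofactor: "poly rank_poly_5_5_cofactor (-1) = 13750"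
  unfolding rank_poly_5_5_cofactor_def by simp

theorem mainTheorem6:
  fixes r :: "nat \<Rightarrow> nat"
  assumes "r 0 = 1" and "r 1 = 25" and "r 2 = 300" and "r 3 = 2300"
    and "r 4 = 12650" and "r 5 = 53129" and "r 6 = 177075" and "r 7 = 480400"
    and "r 8 = 1045525" and "r 9 = 1723450"
    and palin: "\<forall>R\<le>20. r (20 - R) = r R"
  shows "([:1, 1:] dvd rank_poly r \<longleftrightarrow> r 10 = 2047506)
    \<and> (r 10 = 2047506 \<longrightarrow>
         [:1, 1:] ^ 4 dvd rank_poly r \<and> \<not> [:1, 1:] ^ 5 dvd rank_poly r)"
proof -
  have mirror: "r (20 - R) = r R" if "R \<le> 9" for R
    using palin that by simp
  have "r 11 = 1723450" "r 12 = 1045525" "r 13 = 480400" "r 14 = 177075" "r 15 = 53129"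
    "r 16 = 12650" "r 17 = 2300" "r 18 = 300" "r 19 = 25" "r 20 = 1"
    using mirror[of 9] mirror[of 8] mirror[of 7] mirror[of 6] mirror[of 5] mirror[of 4]
      mirror[of 3] mirror[of 2] mirror[of 1] mirror[of 0] assms(1-10) by simp_all
  then have explicit: "rank_poly r = Poly [1, 25, 300, 2300, 12650, 53129, 177075, 480400, 1045525,
      1723450, of_nat (r 10), 1723450, 1045525, 480400, 177075, 53129, 12650, 2300, 300, 25, 1]"
    using assms(1-10) by (simp add: rank_poly_eq_Poly)
  have "[:1, 1:] dvd rank_poly r \<longleftrightarrow> r 10 = 2047506"
    by (simp add: linear_dvd_iff_poly_eq_0 explicit)
  moreover have "[:1, 1:] ^ 4 dvd rank_poly r \<and> \<not> [:1, 1:] ^ 5 dvd rank_poly r"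
    if "r 10 = 2047506"
  proof -
    have factored: "rank_poly r = [:1, 1:] ^ 4 * rank_poly_5_5_cofactor"
      using that by (simp add: explicit rank_poly_5_5_factorization)
    have "\<not> [:1, 1:] dvd rank_poly_5_5_cofactor"
      by (simp add: linear_dvd_iff_poly_eq_0 poly_rank_poly_5_5_cofactor)
    then have "\<not> [:1, 1:] ^ Suc 4 dvd rank_poly r"
      unfolding factored by (subst power_Suc_dvd_power_mult_iff) simp_all
    then show ?thesis
      unfolding factored by (simp del: power_Suc add: numeral_Bit1)
  qed
  ultimately show ?thesis by blast
qed

end
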